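(* Let $\mathcal F'=(\mathcal A',U,\varphi)$ be a weakening of a sequential formalism $\mathcal F=(\mathcal A,U,\varphi)$ and let $\mathcal S$ be a subset of $\mathcal A$. If $\mathcal S$ is algebraically tractable for $\mathcal F'$, then $\mathcal S$ is algebraically tractable for $\mathcal F$.
   Context: A finite non-associative algebra is a tuple $(\mathcal A,\cup,\neg,\emptyset,\mathcal B,\diamond,\overline{\cdot},e)$ where $(\mathcal A,\cup,\neg,\emptyset,\mathcal B)$ is a finite Boolean algebra and for all $x,y,z$: $\overline{\overline x}=x$, $\overline{x\cup y}=\overline x\cup\overline y$, $\overline{x\diamond y}=\overline y\diamond\overline x$, $e\diamond x=x\diamond e=x$, $x\diamond(y\cup z)=(x\diamond y)\cup(x\diamond z)$, $(x\diamond y)\cap\overline z=\emptyset\iff(y\diamond z)\cap\overline x=\emptyset$. $r\subseteq r'$ means $r\cup r'=r'$; atoms are basic relations. A projection operator from $\mathcal A$ to $\mathcal A'$ is a map $\Rsh$ with $\Rsh(r\cup r')=\Rsh r\cup\Rsh r'$ and $\Rsh\overline r=\overline{\Rsh r}$. A finite multi-algebra is a product $\mathcal A_1\times\cdots\times\mathcal A_m$ of finite non-associative algebras with projection operators $\Rsh_i^j:\mathcal A_i\to\mathcal A_j$ for distinct $i,j$. Relations $R=(R_1,\dots,R_m)$; basic if all $R_i$ are atoms; universal $\mathcal B=(\mathcal B_1,\dots,\mathcal B_m)$; operations and $\subseteq$ componentwise; $B\in R$ means $B$ basic, $B\subseteq R$. The projection closure $\Rsh R$ is obtained by repeatedly replacing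 $R_j$ by $R_j\cap\Rsh_i^jR_i$ until a fixed point. A sequential formalism is $(\mathcal A,U,\varphi)$ with $\mathcal A$ a finite multi-algebra, $U\ne\emptyset$, $\varphi:\mathcal A\to 2^{U\times U}$ satisfying $\varphi(\Rsh R)=\varphi(R)$, $\varphi(\overline R)=\varphi(R)^{-1}$, $\varphi((\emptyset,\dots,\emptyset))=\emptyset$, $\varphi(R\diamond R')\supseteq(\varphi(R)\circ\varphi(R'))\cap\varphi(\mathcal B)$, $\varphi(R\cap R')=\varphi(R)\cap\varphi(R')$, $\varphi(R)=\bigcup_{B\in R}\varphi(B)$. A multi-algebra $\mathcal A'$ is a weakening of $\mathcal A$ if it has the same Cartesian product (same algebras and operations) and its projections satisfy $\Rsh_i^jb\subseteq\Rsh_i'^jb$ for all distinct $i,j$ and all atoms $b$ of $\mathcal A_i$ (with $\Rsh$ those of $\mathcal A$, $\Rsh'$ those of $\mathcal A'$); then $(\mathcal A',U,\varphi)$ is called a weakening of $(\mathcal A,U,\varphi)$. A network over $\mathcal S$ is a finite set $E$ of variables with $N^{xy}\in\mathcal S$ for distinct $x,y$, $N^{yx}=\overline{N^{xy}}$; it is satisfiable if there is $(u_x)_{x\in E}\subseteq U$ with $(u_x,u_y)\in\varphi(N^{xy})$ for all distinct $x,y$; trivially inconsistent if some component of some $N^{xy}$ is $\emptyset$. The algebraic closure of $N$ for a formalism is obtained by repeatedly applying $N^{xz}\leftarrow\Rsh N^{xz}$ (projection closure of that formalism's multi-algebra) and $N^{xz}\leftarrow N^{xz}\cap(N^{xy}\diamond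 N^{yz})$ until a fixed point. $\mathcal S$ is algebraically tractable for a formalism if every network over $\mathcal S$ is satisfiable iff its algebraic closure for that formalism is not trivially inconsistent. *)

theory Defs
  imports Main
begin

text \<open>Finite Boolean algebras are represented concretely as powerset algebras
  of their (finite) set of atoms: an element of the i-th algebra is a subset of
  atoms i, union is set union, negation is complement within atoms i, the
  bottom is the empty set and the top is atoms i.\<close>

record 'b multi_alg =
  dim   :: nat
  atoms :: "nat \<Rightarrow> 'b set"
  comp  :: "nat \<Rightarrow> 'b set \<Rightarrow> 'b set \<Rightarrow> 'b set"
  cnv   :: "nat \<Rightarrow> 'b set \<Rightarrow> 'b set"
  ident :: "nat \<Rightarrow> 'b set"
  proj  :: "nat \<Rightarrow> nat \<Rightarrow> 'b set \<Rightarrow> 'b set"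

definition non_assoc_alg ::
  "'b set \<Rightarrow> ('b set \<Rightarrow> 'b set \<Rightarrow> 'b set) \<Rightarrow> ('b set \<Rightarrow> 'b set) \<Rightarrow> 'b set \<Rightarrow> bool" where
  "non_assoc_alg A c v e \<longleftrightarrow>
     finite A \<and> e \<subseteq> A \<and>
     (\<forall>x y. x \<subseteq> A \<longrightarrow> y \<subseteq> A \<longrightarrow> c x y \<subseteq> A) \<and>
     (\<forall>x. x \<subseteq> A \<longrightarrow> v x \<subseteq> A) \<and>
     (\<forall>x. x \<subseteq> A \<longrightarrow> v (v x) = x) \<and>
     (\<forall>x y. x \<subseteq> A \<longrightarrow> y \<subseteq> A \<longrightarrow> v (x \<union> y) = v x \<union> v y) \<and>
     (\<forall>x y. x \<subseteq> A \<longrightarrow> y \<subseteq> A \<longrightarrow> v (c x y) = c (v y) (v x)) \<and>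
     (\<forall>x. x \<subseteq> A \<longrightarrow> c e x = x \<and> c x e = x) \<and>
     (\<forall>x y z. x \<subseteq> A \<longrightarrow> y \<subseteq> A \<longrightarrow> z \<subseteq> A \<longrightarrow> c x (y \<union> z) = c x y \<union> c x z) \<and>
     (\<forall>x y z. x \<subseteq> A \<longrightarrow> y \<subseteq> A \<longrightarrow> z \<subseteq> A \<longrightarrow>
        (c x y \<inter> v z = {} \<longleftrightarrow> c y z \<inter> v x = {}))"

definition projection_op ::
  "'b set \<Rightarrow> ('b set \<Rightarrow> 'b set) \<Rightarrow> 'b set \<Rightarrow> ('b set \<Rightarrow> 'b set) \<Rightarrow> ('b set \<Rightarrow> 'b set) \<Rightarrow> bool" where
  "projection_op A v A' v' P \<longleftrightarrow>
     (\<forall>r. r \<subseteq> A \<longrightarrow> P r \<subseteq> A') \<and>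
     (\<forall>r r'. r \<subseteq> A \<longrightarrow> r' \<subseteq> A \<longrightarrow> P (r \<union> r') = P r \<union> P r') \<and>
     (\<forall>r. r \<subseteq> A \<longrightarrow> P (v r) = v' (P r))"

definition multi_algebra :: "'b multi_alg \<Rightarrow> bool" where
  "multi_algebra M \<longleftrightarrow> 1 \<le> dim M \<and>
     (\<forall>i < dim M. non_assoc_alg (atoms M i) (comp M i) (cnv M i) (ident M i)) \<and>
     (\<forall>i < dim M. \<forall>j < dim M. i \<noteq> j \<longrightarrow>
        projection_op (atoms M i) (cnv M i) (atoms M j) (cnv M j) (proj M i j))"

type_synonym 'b rel = "nat \<Rightarrow> 'b set"

definition rels :: "'b multi_alg \<Rightarrow> 'b rel set" where
  "rels M = {R. (\<forall>i < dim M. R i \<subseteq> atoms M i) \<and> (\<forall>i. dim M \<le> i \<longrightarrow> R i = {})}"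

definition mcomp :: "'b multi_alg \<Rightarrow> 'b rel \<Rightarrow> 'b rel \<Rightarrow> 'b rel" where
  "mcomp M R R' = (\<lambda>i. if i < dim M then comp M i (R i) (R' i) else {})"

definition mconv :: "'b multi_alg \<Rightarrow> 'b rel \<Rightarrow> 'b rel" where
  "mconv M R = (\<lambda>i. if i < dim M then cnv M i (R i) else {})"

definition minter :: "'b rel \<Rightarrow> 'b rel \<Rightarrow> 'b rel" where
  "minter R R' = (\<lambda>i. R i \<inter> R' i)"

definition msub :: "'b rel \<Rightarrow> 'b rel \<Rightarrow> bool" where
  "msub R R' \<longleftrightarrow> (\<forall>i. R i \<subseteq> R' i)"

definition muniv :: "'b multi_alg \<Rightarrow> 'b rel" where
  "muniv M = (\<lambda>i. if i < dim M then atoms M i else {})"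

definition mempty :: "'b rel" where
  "mempty = (\<lambda>i. {})"

definition basic :: "'b multi_alg \<Rightarrow> 'b rel \<Rightarrow> bool" where
  "basic M B \<longleftrightarrow> B \<in> rels M \<and> (\<forall>i < dim M. \<exists>a \<in> atoms M i. B i = {a})"

definition fixpoint_closure :: "('a \<Rightarrow> 'a \<Rightarrow> bool) \<Rightarrow> 'a \<Rightarrow> 'a" where
  "fixpoint_closure step x = (THE y. step\<^sup>*\<^sup>* x y \<and> (\<forall>z. step y z \<longrightarrow> z = y))"

definition proj_step :: "'b multi_alg \<Rightarrow> 'b rel \<Rightarrow> 'b rel \<Rightarrow> bool" where
  "proj_step M R R' \<longleftrightarrow> (\<exists>i < dim M. \<exists>j < dim M. i \<noteq> j \<and>
      R' = R(j := R j \<inter> proj M i j (R i)))"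

definition proj_closure :: "'b multi_alg \<Rightarrow> 'b rel \<Rightarrow> 'b rel" where
  "proj_closure M R = fixpoint_closure (proj_step M) R"

definition seq_formalism :: "'b multi_alg \<Rightarrow> 'u set \<Rightarrow> ('b rel \<Rightarrow> ('u \<times> 'u) set) \<Rightarrow> bool" where
  "seq_formalism M U \<phi> \<longleftrightarrow> multi_algebra M \<and> U \<noteq> {} \<and>
     (\<forall>R \<in> rels M. \<phi> R \<subseteq> U \<times> U) \<and>
     (\<forall>R \<in> rels M. \<phi> (proj_closure M R) = \<phi> R) \<and>
     (\<forall>R \<in> rels M. \<phi> (mconv M R) = (\<phi> R)\<inverse>) \<and>
     \<phi> mempty = {} \<and>
     (\<forall>R \<in> rels M. \<forall>R' \<in> rels M. \<phi> (mcomp M R R') \<supseteq> (\<phi> R O \<phi> R') \<inter> \<phi> (muniv M)) \<and>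
     (\<forall>R \<in> rels M. \<forall>R' \<in> rels M. \<phi> (minter R R') = \<phi> R \<inter> \<phi> R') \<and>
     (\<forall>R \<in> rels M. \<phi> R = (\<Union>B \<in> {B. basic M B \<and> msub B R}. \<phi> B))"

definition weakening :: "'b multi_alg \<Rightarrow> 'b multi_alg \<Rightarrow> bool" where
  "weakening M' M \<longleftrightarrow> multi_algebra M \<and> multi_algebra M' \<and>
     dim M' = dim M \<and> atoms M' = atoms M \<and> comp M' = comp M \<and>
     cnv M' = cnv M \<and> ident M' = ident M \<and>
     (\<forall>i < dim M. \<forall>j < dim M. i \<noteq> j \<longrightarrow>
        (\<forall>a \<in> atoms M i. proj M i j {a} \<subseteq> proj M' i j {a}))"

definition network_over :: "'b multi_alg \<Rightarrow> 'b rel set \<Rightarrow> nat set \<Rightarrow> (nat \<Rightarrow> nat \<Rightarrow> 'b rel) \<Rightarrow> bool" where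
  "network_over M S E N \<longleftrightarrow> finite E \<and>
     (\<forall>x \<in> E. \<forall>y \<in> E. x \<noteq> y \<longrightarrow> N x y \<in> S \<and> N y x = mconv M (N x y))"

definition satisfiable :: "'u set \<Rightarrow> ('b rel \<Rightarrow> ('u \<times> 'u) set) \<Rightarrow> nat set \<Rightarrow> (nat \<Rightarrow> nat \<Rightarrow> 'b rel) \<Rightarrow> bool" where
  "satisfiable U \<phi> E N \<longleftrightarrow> (\<exists>u. (\<forall>x \<in> E. u x \<in> U) \<and>
     (\<forall>x \<in> E. \<forall>y \<in> E. x \<noteq> y \<longrightarrow> (u x, u y) \<in> \<phi> (N x y)))"

definition trivially_inconsistent :: "'b multi_alg \<Rightarrow> nat set \<Rightarrow> (nat \<Rightarrow> nat \<Rightarrow> 'b rel) \<Rightarrow> bool" where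
  "trivially_inconsistent M E N \<longleftrightarrow>
     (\<exists>x \<in> E. \<exists>y \<in> E. x \<noteq> y \<and> (\<exists>i < dim M. N x y i = {}))"

text \<open>One refinement step of algebraic closure; the pair (x,z) and its converse (z,x)
  are updated together so that the result is again a network.\<close>
definition upd_pair :: "'b multi_alg \<Rightarrow> (nat \<Rightarrow> nat \<Rightarrow> 'b rel) \<Rightarrow> nat \<Rightarrow> nat \<Rightarrow> 'b rel \<Rightarrow> (nat \<Rightarrow> nat \<Rightarrow> 'b rel)" where
  "upd_pair M N x z R = (\<lambda>a b. if a = x \<and> b = z then R
                               else if a = z \<and> b = x then mconv M R else N a b)"

definition ac_step :: "'b multi_alg \<Rightarrow> nat set \<Rightarrow> (nat \<Rightarrow> nat \<Rightarrow> 'b rel) \<Rightarrow> (nat \<Rightarrow> nat \<Rightarrow> 'b rel) \<Rightarrow> bool" where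
  "ac_step M E N N' \<longleftrightarrow> (\<exists>x \<in> E. \<exists>z \<in> E. x \<noteq> z \<and>
     (N' = upd_pair M N x z (proj_closure M (N x z)) \<or>
      (\<exists>y \<in> E. y \<noteq> x \<and> y \<noteq> z \<and>
         N' = upd_pair M N x z (minter (N x z) (mcomp M (N x y) (N y z))))))"

definition alg_closure :: "'b multi_alg \<Rightarrow> nat set \<Rightarrow> (nat \<Rightarrow> nat \<Rightarrow> 'b rel) \<Rightarrow> (nat \<Rightarrow> nat \<Rightarrow> 'b rel)" where
  "alg_closure M E N = fixpoint_closure (ac_step M E) N"

definition alg_tractable :: "'b multi_alg \<Rightarrow> 'u set \<Rightarrow> ('b rel \<Rightarrow> ('u \<times> 'u) set) \<Rightarrow> 'b rel set \<Rightarrow> bool" where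
  "alg_tractable M U \<phi> S \<longleftrightarrow> (\<forall>E N. network_over M S E N \<longrightarrow>
     (satisfiable U \<phi> E N \<longleftrightarrow> \<not> trivially_inconsistent M E (alg_closure M E N)))"

end

theory Submission
  imports Defs
begin

(* Soundness of algebraic closure holds in every sequential formalism: each refinement step
   keeps every solution, and phi of a relation with an empty component is empty.  For completeness,
   let C be the closure of N for M and assume no component of C is empty.  A projection
   operator distributes over unions, so on nonempty relations it is the union of its values
   on atoms; hence a nonempty relation that is projection-closed for M is projection-closed for
   the weakening M', and C is a fixed point of the closure steps of M' as well.  Closures are
   the greatest fixed points below the initial network, so C lies below the closure of N for
   M', which is therefore not trivially inconsistent, and tractability of M' yields a
   solution. *)

definition stable :: "('a \<Rightarrow> 'a \<Rightarrow> bool) \<Rightarrow> 'a \<Rightarrow> bool" where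
  "stable step y \<longleftrightarrow> (\<forall>z. step y z \<longrightarrow> z = y)"

lemma fixpoint_closure_eq_The:
  "fixpoint_closure step x = (THE y. step\<^sup>*\<^sup>* x y \<and> stable step y)"
  unfolding fixpoint_closure_def stable_def ..

(* Steps never jump over a stable point below the current one, so every terminating run from x
   ends in the greatest stable point below x; this makes the THE in fixpoint_closure
   well defined. *)

locale refinement_system =
  fixes step :: "'a::order \<Rightarrow> 'a \<Rightarrow> bool" and I :: "'a \<Rightarrow> bool" and \<mu> :: "'a \<Rightarrow> nat"
  assumes step_invariant: "I a \<Longrightarrow> step a b \<Longrightarrow> I b"
    and step_le: "I a \<Longrightarrow> step a b \<Longrightarrow> b \<le> a"
    and step_decreases: "I a \<Longrightarrow> step a b \<Longrightarrow> b \<noteq> a \<Longrightarrow> \<mu> b < \<mu> a"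
    and step_keeps_stable_below: "I a \<Longrightarrow> stable step t \<Longrightarrow> t \<le> a \<Longrightarrow> step a b \<Longrightarrow> t \<le> b"
begin

lemma reachable_invariant_bounds:
  assumes "step\<^sup>*\<^sup>* x z" and "I x"
  shows "I z \<and> z \<le> x \<and> (\<forall>t. stable step t \<longrightarrow> t \<le> x \<longrightarrow> t \<le> z)"
  using assms
proof (induction rule: rtranclp_induct)
  case (step y z)
  then show ?case
    using step_invariant step_le step_keeps_stable_below by (meson order_trans)
qed simp

lemma stable_reachable_exists:
  assumes "I x"
  shows "\<exists>y. step\<^sup>*\<^sup>* x y \<and> stable step y"
  using assms
proof (induction "\<mu> x" arbitrary: x rule: less_induct)
  case less
  show ?case
  proof (cases "stable step x")
    case False
    then obtain b where b: "step x b" "b \<noteq> x"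
      unfolding stable_def by blast
    then obtain y where "step\<^sup>*\<^sup>* b y" "stable step y"
      using less step_invariant step_decreases by blast
    then show ?thesis
      using b(1) by (blast intro: converse_rtranclp_into_rtranclp)
  qed blast
qed

lemma closure_reachable_stable:
  assumes "I x"
  shows "step\<^sup>*\<^sup>* x (fixpoint_closure step x) \<and> stable step (fixpoint_closure step x)"
proof -
  obtain y where y: "step\<^sup>*\<^sup>* x y" "stable step y"
    using stable_reachable_exists[OF assms] by blast
  have "y' = y" if "step\<^sup>*\<^sup>* x y'" "stable step y'" for y'
    using reachable_invariant_bounds[OF y(1) assms] reachable_invariant_bounds[OF that(1) assms] y(2) that(2)
    by (blast intro: order.antisym)
  then have "fixpoint_closure step x = y"
    unfolding fixpoint_closure_eq_The using y by blast
  then show ?thesis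
    using y by simp
qed

lemma closure_reachable: "I x \<Longrightarrow> step\<^sup>*\<^sup>* x (fixpoint_closure step x)"
  using closure_reachable_stable by blast

lemma closure_stable: "I x \<Longrightarrow> stable step (fixpoint_closure step x)"
  using closure_reachable_stable by blast

lemma closure_invariant: "I x \<Longrightarrow> I (fixpoint_closure step x)"
  using reachable_invariant_bounds closure_reachable by blast

lemma closure_le: "I x \<Longrightarrow> fixpoint_closure step x \<le> x"
  using reachable_invariant_bounds closure_reachable by blast

lemma closure_greatest: "I x \<Longrightarrow> stable step t \<Longrightarrow> t \<le> x \<Longrightarrow> t \<le> fixpoint_closure step x"
  using reachable_invariant_bounds closure_reachable by blast

end

lemma
  assumes "non_assoc_alg A c v e"
  shows non_assoc_alg_finite: "finite A"
    and non_assoc_alg_cnv_closed: "x \<subseteq> A \<Longrightarrow> v x \<subseteq> A"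
    and non_assoc_alg_cnv_cnv: "x \<subseteq> A \<Longrightarrow> v (v x) = x"
    and non_assoc_alg_comp_closed: "x \<subseteq> A \<Longrightarrow> y \<subseteq> A \<Longrightarrow> c x y \<subseteq> A"
    and non_assoc_alg_cnv_comp: "x \<subseteq> A \<Longrightarrow> y \<subseteq> A \<Longrightarrow> v (c x y) = c (v y) (v x)"
    and non_assoc_alg_cnv_Un: "x \<subseteq> A \<Longrightarrow> y \<subseteq> A \<Longrightarrow> v (x \<union> y) = v x \<union> v y"
    and non_assoc_alg_comp_Un:
      "x \<subseteq> A \<Longrightarrow> y \<subseteq> A \<Longrightarrow> z \<subseteq> A \<Longrightarrow> c x (y \<union> z) = c x y \<union> c x z"
  using assms unfolding non_assoc_alg_def by simp_all

lemma non_assoc_alg_cnv_mono: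
  assumes "non_assoc_alg A c v e" and "x \<subseteq> y" and "y \<subseteq> A"
  shows "v x \<subseteq> v y"
proof -
  have "v y = v (x \<union> y)"
    using assms(2) by (simp add: sup_absorb2)
  also have "\<dots> = v x \<union> v y"
    using assms by (simp add: non_assoc_alg_cnv_Un[OF assms(1)] subset_trans)
  finally show ?thesis by blast
qed

lemma non_assoc_alg_comp_mono_right:
  assumes "non_assoc_alg A c v e" and "x \<subseteq> A" and "y \<subseteq> y'" and "y' \<subseteq> A"
  shows "c x y \<subseteq> c x y'"
proof -
  have "c x y' = c x (y \<union> y')"
    using assms(3) by (simp add: sup_absorb2)
  also have "\<dots> = c x y \<union> c x y'"
    using assms by (simp add: non_assoc_alg_comp_Un[OF assms(1)] subset_trans)
  finally show ?thesis by blast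
qed

(* Monotonicity on the left is reduced to monotonicity on the right via the converse. *)

lemma non_assoc_alg_comp_mono:
  assumes na: "non_assoc_alg A c v e"
    and x: "x \<subseteq> x'" "x' \<subseteq> A" and y: "y \<subseteq> y'" "y' \<subseteq> A"
  shows "c x y \<subseteq> c x' y'"
proof -
  have xA: "x \<subseteq> A"
    using x by blast
  have flip: "c z y' = v (c (v y') (v z))" if "z \<subseteq> A" for z
    using that y(2) by (simp add: non_assoc_alg_cnv_comp[OF na, symmetric]
        non_assoc_alg_cnv_cnv[OF na] non_assoc_alg_comp_closed[OF na])
  have "c x y \<subseteq> c x y'"
    by (rule non_assoc_alg_comp_mono_right[OF na xA y])
  also have "\<dots> = v (c (v y') (v x))"
    by (rule flip[OF xA])
  also have "\<dots> \<subseteq> v (c (v y') (v x'))"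
    by (intro non_assoc_alg_cnv_mono[OF na] non_assoc_alg_comp_mono_right[OF na]
        non_assoc_alg_cnv_mono[OF na x] non_assoc_alg_cnv_closed[OF na]
        non_assoc_alg_comp_closed[OF na] y(2) x(2))
  also have "\<dots> = c x' y'"
    by (rule flip[OF x(2), symmetric])
  finally show ?thesis .
qed

lemma projection_op_mono:
  assumes "projection_op A v A' v' P" and "r \<subseteq> r'" and "r' \<subseteq> A"
  shows "P r \<subseteq> P r'"
proof -
  have "P r' = P (r \<union> r')"
    using assms(2) by (simp add: sup_absorb2)
  also have "\<dots> = P r \<union> P r'"
    using assms unfolding projection_op_def by (meson order_trans)
  finally show ?thesis by blast
qed

lemma projection_op_UN_singletons:
  assumes "projection_op A v A' v' P" and "finite r" and "r \<noteq> {}" and "r \<subseteq> A"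
  shows "P r = (\<Union>a\<in>r. P {a})"
  using assms(2-4)
proof (induction r rule: finite_ne_induct)
  case (insert x F)
  then have "P (insert x F) = P {x} \<union> P F"
    using assms(1) unfolding projection_op_def by (metis insert_is_Un insert_subset empty_subsetI)
  then show ?case
    using insert by simp
qed simp

lemma multi_algebra_non_assoc_alg:
  "multi_algebra M \<Longrightarrow> i < dim M \<Longrightarrow> non_assoc_alg (atoms M i) (comp M i) (cnv M i) (ident M i)"
  unfolding multi_algebra_def by blast

lemma multi_algebra_projection_op:
  "multi_algebra M \<Longrightarrow> i < dim M \<Longrightarrow> j < dim M \<Longrightarrow> i \<noteq> j \<Longrightarrow>
    projection_op (atoms M i) (cnv M i) (atoms M j) (cnv M j) (proj M i j)"
  unfolding multi_algebra_def by blast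

lemma rels_subset_atoms: "R \<in> rels M \<Longrightarrow> i < dim M \<Longrightarrow> R i \<subseteq> atoms M i"
  unfolding rels_def by blast

lemma rels_beyond_dim: "R \<in> rels M \<Longrightarrow> \<not> i < dim M \<Longrightarrow> R i = {}"
  unfolding rels_def by simp

lemma relsI:
  "(\<And>i. i < dim M \<Longrightarrow> R i \<subseteq> atoms M i) \<Longrightarrow> (\<And>i. \<not> i < dim M \<Longrightarrow> R i = {}) \<Longrightarrow> R \<in> rels M"
  unfolding rels_def by auto

lemma rels_finite:
  assumes "multi_algebra M" and "R \<in> rels M"
  shows "finite (R i)"
proof (cases "i < dim M")
  case True
  then show ?thesis
    using assms by (meson finite_subset rels_subset_atoms non_assoc_alg_finite
        multi_algebra_non_assoc_alg)
qed (simp add: rels_beyond_dim[OF assms(2)])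

lemma rels_downward_closed: "R' \<in> rels M \<Longrightarrow> R \<le> R' \<Longrightarrow> R \<in> rels M"
  unfolding rels_def le_fun_def by blast

lemma muniv_rels: "muniv M \<in> rels M"
  by (rule relsI) (auto simp: muniv_def)

lemma minter_le_left: "minter R R' \<le> R"
  and minter_le_right: "minter R R' \<le> R'"
  unfolding minter_def le_fun_def by blast+

lemma mconv_rels:
  assumes "multi_algebra M" and "R \<in> rels M"
  shows "mconv M R \<in> rels M"
proof (rule relsI)
  show "mconv M R i \<subseteq> atoms M i" if "i < dim M" for i
    using that non_assoc_alg_cnv_closed[OF multi_algebra_non_assoc_alg rels_subset_atoms]
      assms by (simp add: mconv_def)
qed (simp add: mconv_def)

lemma mcomp_rels:
  assumes "multi_algebra M" and "R \<in> rels M" and "R' \<in> rels M"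
  shows "mcomp M R R' \<in> rels M"
proof (rule relsI)
  show "mcomp M R R' i \<subseteq> atoms M i" if "i < dim M" for i
    using that non_assoc_alg_comp_closed[OF multi_algebra_non_assoc_alg rels_subset_atoms
        rels_subset_atoms] assms by (simp add: mcomp_def)
qed (simp add: mcomp_def)

lemma mconv_mconv:
  assumes ma: "multi_algebra M" and R: "R \<in> rels M"
  shows "mconv M (mconv M R) = R"
proof
  show "mconv M (mconv M R) i = R i" for i
    using non_assoc_alg_cnv_cnv[OF multi_algebra_non_assoc_alg[OF ma] rels_subset_atoms[OF R]]
      rels_beyond_dim[OF R]
    by (simp add: mconv_def)
qed

lemma mconv_mono:
  assumes ma: "multi_algebra M" and R': "R' \<in> rels M" and le: "R \<le> R'"
  shows "mconv M R \<le> mconv M R'"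
proof (rule le_funI)
  show "mconv M R i \<subseteq> mconv M R' i" for i
    using non_assoc_alg_cnv_mono[OF multi_algebra_non_assoc_alg[OF ma] le_funD[OF le]
        rels_subset_atoms[OF R']]
    by (simp add: mconv_def)
qed

lemma mcomp_mono:
  assumes ma: "multi_algebra M" and R': "R1' \<in> rels M" "R2' \<in> rels M"
    and le: "R1 \<le> R1'" "R2 \<le> R2'"
  shows "mcomp M R1 R2 \<le> mcomp M R1' R2'"
proof (rule le_funI)
  show "mcomp M R1 R2 i \<subseteq> mcomp M R1' R2' i" for i
    using non_assoc_alg_comp_mono[OF multi_algebra_non_assoc_alg[OF ma] le_funD[OF le(1)]
        rels_subset_atoms[OF R'(1)] le_funD[OF le(2)] rels_subset_atoms[OF R'(2)]]
    by (simp add: mcomp_def)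
qed

definition rel_size :: "'b multi_alg \<Rightarrow> 'b rel \<Rightarrow> nat" where
  "rel_size M R = (\<Sum>i<dim M. card (R i))"

lemma rel_size_mono:
  assumes "multi_algebra M" and "R' \<in> rels M" and "R \<le> R'"
  shows "rel_size M R \<le> rel_size M R'"
  unfolding rel_size_def
  using assms rels_finite by (intro sum_mono card_mono) (auto simp: le_fun_def)

lemma rel_size_strict_mono:
  assumes ma: "multi_algebra M" and R': "R' \<in> rels M" and le: "R \<le> R'" and ne: "R \<noteq> R'"
  shows "rel_size M R < rel_size M R'"
proof -
  obtain i where i: "R i \<noteq> R' i"
    using ne by blast
  have "i < dim M"
    using i rels_beyond_dim[OF R'] rels_beyond_dim[OF rels_downward_closed[OF R' le]] by metis
  moreover have "card (R i) < card (R' i)"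
    using i le_funD[OF le] rels_finite[OF ma R'] by (blast intro: psubset_card_mono)
  ultimately show ?thesis
    unfolding rel_size_def
    using le rels_finite[OF ma R']
    by (intro sum_strict_mono_strong) (auto intro: card_mono simp: le_fun_def)
qed

definition proj_closed :: "'b multi_alg \<Rightarrow> 'b rel \<Rightarrow> bool" where
  "proj_closed M R \<longleftrightarrow> (\<forall>i<dim M. \<forall>j<dim M. i \<noteq> j \<longrightarrow> R j \<subseteq> proj M i j (R i))"

lemma proj_stepE:
  assumes "proj_step M R R'"
  obtains i j where "i < dim M" "j < dim M" "i \<noteq> j" "R' = R(j := R j \<inter> proj M i j (R i))"
  using assms unfolding proj_step_def by blast

lemma stable_proj_step_iff: "stable (proj_step M) R \<longleftrightarrow> proj_closed M R"
proof
  assume "stable (proj_step M) R"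
  then have "R(j := R j \<inter> proj M i j (R i)) = R" if "i < dim M" "j < dim M" "i \<noteq> j" for i j
    using that unfolding stable_def proj_step_def by blast
  then show "proj_closed M R"
    unfolding proj_closed_def by (metis fun_upd_same inf.absorb_iff1)
next
  assume "proj_closed M R"
  then show "stable (proj_step M) R"
    unfolding stable_def proj_closed_def by (auto elim!: proj_stepE simp: inf.absorb1)
qed

lemma proj_refinement_system:
  assumes ma: "multi_algebra M"
  shows "refinement_system (proj_step M) (\<lambda>R. R \<in> rels M) (rel_size M)"
proof
  fix R R' assume R: "R \<in> rels M" and st: "proj_step M R R'"
  from st obtain i j where ij: "i < dim M" "j < dim M" "i \<noteq> j"
    and R': "R' = R(j := R j \<inter> proj M i j (R i))"
    by (rule proj_stepE)
  show le: "R' \<le> R"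
    unfolding R' le_fun_def by simp
  then show "R' \<in> rels M"
    using R by (rule rels_downward_closed[rotated])
  show "rel_size M R' < rel_size M R" if "R' \<noteq> R"
    using rel_size_strict_mono[OF ma R le that] .
  show "T \<le> R'" if "stable (proj_step M) T" and "T \<le> R" for T
  proof -
    have "T j \<subseteq> proj M i j (T i)"
      using that(1) ij unfolding stable_proj_step_iff proj_closed_def by blast
    also have "\<dots> \<subseteq> proj M i j (R i)"
      using projection_op_mono[OF multi_algebra_projection_op[OF ma ij] le_funD[OF that(2)]
          rels_subset_atoms[OF R ij(1)]] .
    finally show ?thesis
      using that(2) unfolding R' le_fun_def by auto
  qed
qed

context
  fixes M :: "'b multi_alg" and R :: "'b rel"
  assumes ma: "multi_algebra M" and R: "R \<in> rels M"
begin

interpretation refinement_system "proj_step M" "\<lambda>R. R \<in> rels M" "rel_size M"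
  by (rule proj_refinement_system[OF ma])

lemma proj_closure_rels: "proj_closure M R \<in> rels M"
  unfolding proj_closure_def by (rule closure_invariant[OF R])

lemma proj_closure_le: "proj_closure M R \<le> R"
  unfolding proj_closure_def by (rule closure_le[OF R])

lemma proj_closure_proj_closed: "proj_closed M (proj_closure M R)"
  unfolding proj_closure_def stable_proj_step_iff[symmetric] by (rule closure_stable[OF R])

lemma proj_closure_greatest: "proj_closed M T \<Longrightarrow> T \<le> R \<Longrightarrow> T \<le> proj_closure M R"
  unfolding proj_closure_def stable_proj_step_iff[symmetric] by (rule closure_greatest[OF R])

end

lemma proj_closure_id:
  "multi_algebra M \<Longrightarrow> R \<in> rels M \<Longrightarrow> proj_closed M R \<Longrightarrow> proj_closure M R = R"
  by (simp add: order.antisym proj_closure_le proj_closure_greatest)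

definition rel_network :: "'b multi_alg \<Rightarrow> nat set \<Rightarrow> (nat \<Rightarrow> nat \<Rightarrow> 'b rel) \<Rightarrow> bool" where
  "rel_network M E N \<longleftrightarrow>
     (\<forall>a\<in>E. \<forall>b\<in>E. a \<noteq> b \<longrightarrow> N a b \<in> rels M \<and> N b a = mconv M (N a b))"

definition alg_closed :: "'b multi_alg \<Rightarrow> nat set \<Rightarrow> (nat \<Rightarrow> nat \<Rightarrow> 'b rel) \<Rightarrow> bool" where
  "alg_closed M E N \<longleftrightarrow> (\<forall>a\<in>E. \<forall>c\<in>E. a \<noteq> c \<longrightarrow>
     proj_closure M (N a c) = N a c \<and> N c a = mconv M (N a c) \<and>
     (\<forall>b\<in>E. b \<noteq> a \<longrightarrow> b \<noteq> c \<longrightarrow> N a c \<le> mcomp M (N a b) (N b c)))"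

definition network_size :: "'b multi_alg \<Rightarrow> nat set \<Rightarrow> (nat \<Rightarrow> nat \<Rightarrow> 'b rel) \<Rightarrow> nat" where
  "network_size M E N = (\<Sum>(p, q) \<in> E \<times> E - Id. rel_size M (N p q))"

lemma rel_networkD:
  "rel_network M E N \<Longrightarrow> a \<in> E \<Longrightarrow> b \<in> E \<Longrightarrow> a \<noteq> b \<Longrightarrow> N a b \<in> rels M"
  "rel_network M E N \<Longrightarrow> a \<in> E \<Longrightarrow> b \<in> E \<Longrightarrow> a \<noteq> b \<Longrightarrow> N b a = mconv M (N a b)"
  unfolding rel_network_def by blast+

lemma upd_pair_apply:
  "upd_pair M N a c R p q = (if p = a \<and> q = c then R else if p = c \<and> q = a then mconv M R else N p q)"
  by (simp add: upd_pair_def)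

lemma ac_stepE:
  assumes "ac_step M E N N'"
  obtains (proj) a c where "a \<in> E" "c \<in> E" "a \<noteq> c"
      "N' = upd_pair M N a c (proj_closure M (N a c))"
    | (comp) a b c where "a \<in> E" "b \<in> E" "c \<in> E" "a \<noteq> c" "b \<noteq> a" "b \<noteq> c"
      "N' = upd_pair M N a c (minter (N a c) (mcomp M (N a b) (N b c)))"
  using assms unfolding ac_step_def by blast

lemma ac_step_upd_pair:
  assumes ma: "multi_algebra M" and N: "rel_network M E N" and st: "ac_step M E N N'"
  obtains a c R where "a \<in> E" "c \<in> E" "a \<noteq> c" "R \<in> rels M" "R \<le> N a c"
    "N' = upd_pair M N a c R"
  using st
proof (cases rule: ac_stepE)
  case (proj a c)
  then show ?thesis
    using that rel_networkD(1)[OF N] proj_closure_rels[OF ma] proj_closure_le[OF ma] by blast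
next
  case (comp a b c)
  then show ?thesis
    using that rel_networkD(1)[OF N] minter_le_left rels_downward_closed by blast
qed

lemma stable_ac_step_iff: "stable (ac_step M E) N \<longleftrightarrow> alg_closed M E N"
proof
  assume st: "stable (ac_step M E) N"
  show "alg_closed M E N"
    unfolding alg_closed_def
  proof (intro ballI impI conjI)
    fix a c assume ac: "a \<in> E" "c \<in> E" "a \<noteq> c"
    have "upd_pair M N a c (proj_closure M (N a c)) = N"
      using st ac unfolding stable_def ac_step_def by blast
    from fun_cong[OF fun_cong[OF this]] ac(3)
    show "proj_closure M (N a c) = N a c" and "N c a = mconv M (N a c)"
      by (metis upd_pair_apply)+
    show "N a c \<le> mcomp M (N a b) (N b c)" if "b \<in> E" "b \<noteq> a" "b \<noteq> c" for b
    proof -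
      have "upd_pair M N a c (minter (N a c) (mcomp M (N a b) (N b c))) = N"
        using st ac that unfolding stable_def ac_step_def by blast
      from fun_cong[OF fun_cong[OF this]] show ?thesis
        using minter_le_right by (metis upd_pair_apply)
    qed
  qed
next
  assume cl: "alg_closed M E N"
  have "upd_pair M N a c (N a c) = N" if "a \<in> E" "c \<in> E" "a \<noteq> c" for a c
    using cl that unfolding alg_closed_def by (auto simp: fun_eq_iff upd_pair_apply)
  moreover have "minter (N a c) (mcomp M (N a b) (N b c)) = N a c"
    if "a \<in> E" "b \<in> E" "c \<in> E" "a \<noteq> c" "b \<noteq> a" "b \<noteq> c" for a b c
  proof -
    have "N a c \<le> mcomp M (N a b) (N b c)"
      using cl that unfolding alg_closed_def by blast
    then show ?thesis
      unfolding minter_def le_fun_def by auto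
  qed
  ultimately show "stable (ac_step M E) N"
    using cl unfolding stable_def alg_closed_def by (metis ac_stepE)
qed

lemma upd_pair_rel_network:
  assumes ma: "multi_algebra M" and N: "rel_network M E N"
    and "a \<in> E" "c \<in> E" "a \<noteq> c" and R: "R \<in> rels M"
  shows "rel_network M E (upd_pair M N a c R)"
  unfolding rel_network_def
proof (intro ballI impI)
  fix p q assume pq: "p \<in> E" "q \<in> E" "p \<noteq> q"
  consider "p = a \<and> q = c" | "p = c \<and> q = a" | "\<not> (p = a \<and> q = c)" "\<not> (p = c \<and> q = a)"
    by blast
  then show "upd_pair M N a c R p q \<in> rels M \<and>
    upd_pair M N a c R q p = mconv M (upd_pair M N a c R p q)"
    by cases (use assms mconv_rels[OF ma R] mconv_mconv[OF ma R] rel_networkD[OF N pq]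
        in \<open>auto simp: upd_pair_apply\<close>)
qed

lemma upd_pair_le:
  assumes ma: "multi_algebra M" and N: "rel_network M E N"
    and ac: "a \<in> E" "c \<in> E" "a \<noteq> c" and le: "R \<le> N a c"
  shows "upd_pair M N a c R \<le> N"
proof -
  have "mconv M R \<le> N c a"
    using mconv_mono[OF ma rel_networkD(1)[OF N ac] le] rel_networkD(2)[OF N ac] by simp
  then show ?thesis
    using le ac(3) by (auto simp: le_fun_def upd_pair_apply)
qed

lemma le_upd_pair:
  assumes "T \<le> N" and "T a c \<le> R" and "T c a \<le> mconv M R"
  shows "T \<le> upd_pair M N a c R"
  using assms by (simp add: le_fun_def upd_pair_apply)

lemma upd_pair_size_less:
  assumes ma: "multi_algebra M" and fin: "finite E" and N: "rel_network M E N"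
    and ac: "a \<in> E" "c \<in> E" "a \<noteq> c" and R: "R \<in> rels M" "R \<le> N a c"
    and ne: "upd_pair M N a c R \<noteq> N"
  shows "network_size M E (upd_pair M N a c R) < network_size M E N"
proof -
  let ?N' = "upd_pair M N a c R"
  have N': "rel_network M E ?N'"
    by (rule upd_pair_rel_network[OF ma N ac R(1)])
  have le: "?N' \<le> N"
    by (rule upd_pair_le[OF ma N ac R(2)])
  obtain p q where pq: "?N' p q \<noteq> N p q"
    using ne by blast
  then have pqE: "(p, q) \<in> E \<times> E - Id"
    using ac by (auto simp: upd_pair_apply split: if_splits)
  have Nr: "N p' q' \<in> rels M" if "(p', q') \<in> E \<times> E - Id" for p' q'
    using that rel_networkD(1)[OF N] by blast
  show ?thesis
    unfolding network_size_def
    using fin rel_size_strict_mono[OF ma Nr[OF pqE] le_funD[OF le_funD[OF le]] pq]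
      Nr rel_size_mono[OF ma _ le_funD[OF le_funD[OF le]]]
    by (intro sum_strict_mono_strong[OF _ pqE]) (auto split: prod.splits)
qed

lemma ac_step_keeps_alg_closed_below:
  assumes ma: "multi_algebra M" and N: "rel_network M E N" and cl: "alg_closed M E T"
    and T: "T \<le> N" and st: "ac_step M E N N'"
  shows "T \<le> N'"
proof -
  have Nr: "N p q \<in> rels M" if "p \<in> E" "q \<in> E" "p \<noteq> q" for p q
    using rel_networkD(1)[OF N that] .
  have Tle: "T p q \<le> N p q" for p q
    using T by (simp add: le_fun_def)
  have below: "T \<le> upd_pair M N a c R"
    if ac: "a \<in> E" "c \<in> E" "a \<noteq> c" and R: "R \<in> rels M" "T a c \<le> R" for a c R
  proof (rule le_upd_pair[OF T R(2)])
    have "T c a = mconv M (T a c)"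
      using cl ac unfolding alg_closed_def by blast
    then show "T c a \<le> mconv M R"
      using mconv_mono[OF ma R] by simp
  qed
  from st show "T \<le> N'"
  proof (cases rule: ac_stepE)
    case (proj a c)
    have Tr: "T a c \<in> rels M"
      using rels_downward_closed[OF Nr[OF proj(1-3)] Tle] .
    have "proj_closure M (T a c) = T a c"
      using cl proj unfolding alg_closed_def by blast
    then have "proj_closed M (T a c)"
      using proj_closure_proj_closed[OF ma Tr] by simp
    then have "T a c \<le> proj_closure M (N a c)"
      using proj_closure_greatest[OF ma Nr[OF proj(1-3)] _ Tle] by blast
    then show ?thesis
      using below[OF proj(1-3) proj_closure_rels[OF ma Nr[OF proj(1-3)]]] proj(4) by blast
  next
    case (comp a b c)
    have "T a c \<le> mcomp M (T a b) (T b c)"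
      using cl comp unfolding alg_closed_def by blast
    also have "\<dots> \<le> mcomp M (N a b) (N b c)"
      using comp by (intro mcomp_mono[OF ma] Nr Tle) auto
    finally have "T a c \<le> minter (N a c) (mcomp M (N a b) (N b c))"
      using Tle[of a c] unfolding minter_def le_fun_def by blast
    moreover have "minter (N a c) (mcomp M (N a b) (N b c)) \<in> rels M"
      using comp Nr minter_le_left rels_downward_closed by blast
    ultimately show ?thesis
      using below comp by blast
  qed
qed

lemma ac_refinement_system:
  assumes ma: "multi_algebra M" and fin: "finite E"
  shows "refinement_system (ac_step M E) (rel_network M E) (network_size M E)"
proof
  fix N N' assume N: "rel_network M E N" and st: "ac_step M E N N'"
  obtain a c R where ac: "a \<in> E" "c \<in> E" "a \<noteq> c" and R: "R \<in> rels M" "R \<le> N a c"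
    and N': "N' = upd_pair M N a c R"
    using ac_step_upd_pair[OF ma N st] .
  show "rel_network M E N'"
    unfolding N' by (rule upd_pair_rel_network[OF ma N ac R(1)])
  show "N' \<le> N"
    unfolding N' by (rule upd_pair_le[OF ma N ac R(2)])
  show "network_size M E N' < network_size M E N" if "N' \<noteq> N"
    using upd_pair_size_less[OF ma fin N ac R] that unfolding N' by blast
next
  fix N N' T
  assume "rel_network M E N" "stable (ac_step M E) T" "T \<le> N" "ac_step M E N N'"
  then show "T \<le> N'"
    using ac_step_keeps_alg_closed_below[OF ma] stable_ac_step_iff by blast
qed

context
  fixes M :: "'b multi_alg" and E :: "nat set" and N :: "nat \<Rightarrow> nat \<Rightarrow> 'b rel"
  assumes ma: "multi_algebra M" and fin: "finite E" and N: "rel_network M E N"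
begin

interpretation refinement_system "ac_step M E" "rel_network M E" "network_size M E"
  by (rule ac_refinement_system[OF ma fin])

lemma alg_closure_reachable: "(ac_step M E)\<^sup>*\<^sup>* N (alg_closure M E N)"
  unfolding alg_closure_def by (rule closure_reachable[OF N])

lemma alg_closure_rel_network: "rel_network M E (alg_closure M E N)"
  unfolding alg_closure_def by (rule closure_invariant[OF N])

lemma alg_closure_le: "alg_closure M E N \<le> N"
  unfolding alg_closure_def by (rule closure_le[OF N])

lemma alg_closure_alg_closed: "alg_closed M E (alg_closure M E N)"
  unfolding alg_closure_def stable_ac_step_iff[symmetric] by (rule closure_stable[OF N])

lemma alg_closure_greatest: "alg_closed M E T \<Longrightarrow> T \<le> N \<Longrightarrow> T \<le> alg_closure M E N"
  unfolding alg_closure_def stable_ac_step_iff[symmetric] by (rule closure_greatest[OF N])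

end

definition solution ::
  "('b rel \<Rightarrow> ('u \<times> 'u) set) \<Rightarrow> nat set \<Rightarrow> (nat \<Rightarrow> nat \<Rightarrow> 'b rel) \<Rightarrow> (nat \<Rightarrow> 'u) \<Rightarrow> bool" where
  "solution \<phi> E N u \<longleftrightarrow> (\<forall>x\<in>E. \<forall>y\<in>E. x \<noteq> y \<longrightarrow> (u x, u y) \<in> \<phi> (N x y))"

lemma
  assumes "seq_formalism M U \<phi>"
  shows seq_formalism_multi_algebra: "multi_algebra M"
    and seq_formalism_proj_closure: "R \<in> rels M \<Longrightarrow> \<phi> (proj_closure M R) = \<phi> R"
    and seq_formalism_mconv: "R \<in> rels M \<Longrightarrow> \<phi> (mconv M R) = (\<phi> R)\<inverse>"
    and seq_formalism_minter: "R \<in> rels M \<Longrightarrow> R' \<in> rels M \<Longrightarrow> \<phi> (minter R R') = \<phi> R \<inter> \<phi> R'"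
    and seq_formalism_basic: "R \<in> rels M \<Longrightarrow> \<phi> R = (\<Union>B \<in> {B. basic M B \<and> msub B R}. \<phi> B)"
  using assms unfolding seq_formalism_def by simp_all

lemma seq_formalism_mcomp:
  assumes "seq_formalism M U \<phi>" and "R \<in> rels M" and "R' \<in> rels M"
  shows "(\<phi> R O \<phi> R') \<inter> \<phi> (muniv M) \<subseteq> \<phi> (mcomp M R R')"
proof -
  have "\<forall>R \<in> rels M. \<forall>R' \<in> rels M. (\<phi> R O \<phi> R') \<inter> \<phi> (muniv M) \<subseteq> \<phi> (mcomp M R R')"
    using assms(1) unfolding seq_formalism_def by (elim conjE) assumption
  then show ?thesis
    using assms(2,3) by blast
qed

lemma seq_formalism_subset_muniv:
  assumes sf: "seq_formalism M U \<phi>" and R: "R \<in> rels M"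
  shows "\<phi> R \<subseteq> \<phi> (muniv M)"
proof -
  have "minter R (muniv M) = R"
  proof
    show "minter R (muniv M) i = R i" for i
      using rels_subset_atoms[OF R] rels_beyond_dim[OF R] by (auto simp: minter_def muniv_def)
  qed
  then have "\<phi> R = \<phi> R \<inter> \<phi> (muniv M)"
    using seq_formalism_minter[OF sf R muniv_rels] by simp
  then show ?thesis
    by blast
qed

lemma seq_formalism_nonempty:
  assumes "seq_formalism M U \<phi>" and R: "R \<in> rels M" and "\<phi> R \<noteq> {}" and "i < dim M"
  shows "R i \<noteq> {}"
proof -
  obtain B where "basic M B" "msub B R"
    using seq_formalism_basic[OF assms(1) R] assms(3) by auto
  then show ?thesis
    using assms(4) unfolding basic_def msub_def by fastforce
qed

lemma solution_upd_pair:
  assumes sf: "seq_formalism M U \<phi>" and u: "solution \<phi> E N u"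
    and R: "R \<in> rels M" and uR: "(u a, u c) \<in> \<phi> R"
  shows "solution \<phi> E (upd_pair M N a c R) u"
  using u uR seq_formalism_mconv[OF sf R] unfolding solution_def by (auto simp: upd_pair_apply)

lemma ac_step_preserves_solution:
  assumes sf: "seq_formalism M U \<phi>" and N: "rel_network M E N" and u: "solution \<phi> E N u"
    and st: "ac_step M E N N'"
  shows "solution \<phi> E N' u"
proof -
  note ma = seq_formalism_multi_algebra[OF sf]
  have Nr: "N p q \<in> rels M" if "p \<in> E" "q \<in> E" "p \<noteq> q" for p q
    using rel_networkD(1)[OF N that] .
  have uN: "(u p, u q) \<in> \<phi> (N p q)" if "p \<in> E" "q \<in> E" "p \<noteq> q" for p q
    using u that unfolding solution_def by blast
  from st show ?thesis
  proof (cases rule: ac_stepE)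
    case (proj a c)
    then show ?thesis
      using solution_upd_pair[OF sf u proj_closure_rels[OF ma Nr]] uN
        seq_formalism_proj_closure[OF sf Nr] by simp
  next
    case (comp a b c)
    have "(u a, u c) \<in> (\<phi> (N a b) O \<phi> (N b c)) \<inter> \<phi> (muniv M)"
      using uN comp seq_formalism_subset_muniv[OF sf Nr] by blast
    then have "(u a, u c) \<in> \<phi> (mcomp M (N a b) (N b c))"
      using seq_formalism_mcomp[OF sf Nr Nr] comp by blast
    then have "(u a, u c) \<in> \<phi> (minter (N a c) (mcomp M (N a b) (N b c)))"
      using seq_formalism_minter[OF sf Nr mcomp_rels[OF ma Nr Nr]] uN comp by blast
    then show ?thesis
      using solution_upd_pair[OF sf u] comp Nr minter_le_left rels_downward_closed by blast
  qed
qed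

lemma alg_closure_sound:
  assumes sf: "seq_formalism M U \<phi>" and fin: "finite E" and N: "rel_network M E N"
    and sat: "satisfiable U \<phi> E N"
  shows "\<not> trivially_inconsistent M E (alg_closure M E N)"
proof -
  note ma = seq_formalism_multi_algebra[OF sf]
  obtain u where u: "solution \<phi> E N u"
    using sat unfolding satisfiable_def solution_def by blast
  have "rel_network M E N' \<and> solution \<phi> E N' u" if "(ac_step M E)\<^sup>*\<^sup>* N N'" for N'
    using that
  proof (induction rule: rtranclp_induct)
    case (step N' N'')
    then show ?case
      using ac_step_preserves_solution[OF sf]
        refinement_system.step_invariant[OF ac_refinement_system[OF ma fin]] by blast
  qed (use N u in blast)
  then have "solution \<phi> E (alg_closure M E N) u"
    using alg_closure_reachable[OF ma fin N] by blast
  then show ?thesis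
    using rel_networkD(1)[OF alg_closure_rel_network[OF ma fin N]] seq_formalism_nonempty[OF sf]
    unfolding trivially_inconsistent_def solution_def by (metis empty_iff)
qed

lemma trivially_inconsistent_mono:
  "N \<le> N' \<Longrightarrow> trivially_inconsistent M E N' \<Longrightarrow> trivially_inconsistent M E N"
  unfolding trivially_inconsistent_def le_fun_def by blast

lemma
  assumes "weakening M' M"
  shows weakening_rels: "rels M' = rels M"
    and weakening_mconv: "mconv M' = mconv M"
    and weakening_mcomp: "mcomp M' = mcomp M"
    and weakening_network_over: "network_over M' = network_over M"
    and weakening_trivially_inconsistent: "trivially_inconsistent M' = trivially_inconsistent M"
proof -
  have eq: "dim M' = dim M" "atoms M' = atoms M" "comp M' = comp M" "cnv M' = cnv M"
    using assms unfolding weakening_def by simp_all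
  show "rels M' = rels M" "mconv M' = mconv M" "mcomp M' = mcomp M"
    "trivially_inconsistent M' = trivially_inconsistent M"
    by (simp_all add: fun_eq_iff rels_def mconv_def mcomp_def trivially_inconsistent_def eq)
  then show "network_over M' = network_over M"
    by (simp add: fun_eq_iff network_over_def)
qed

(* Nonemptiness is needed: the weakening only compares projections of atoms, and a projection
   operator need not send the empty relation to the empty relation. *)

lemma weakening_proj_closed:
  assumes w: "weakening M' M" and R: "R \<in> rels M" and ne: "\<forall>i<dim M. R i \<noteq> {}"
    and pc: "proj_closed M R"
  shows "proj_closed M' R"
  unfolding proj_closed_def
proof (intro allI impI)
  fix i j assume ij': "i < dim M'" "j < dim M'" "i \<noteq> j"
  have ma: "multi_algebra M" and ma': "multi_algebra M'" and dim: "dim M' = dim M"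
    and eq: "atoms M' = atoms M" "cnv M' = cnv M"
    and atoms_le: "\<forall>a \<in> atoms M i. proj M i j {a} \<subseteq> proj M' i j {a}"
    using w ij' unfolding weakening_def by simp_all
  have ij: "i < dim M" "j < dim M" "i \<noteq> j"
    using ij' dim by simp_all
  have Ri: "finite (R i)" "R i \<noteq> {}" "R i \<subseteq> atoms M i"
    using rels_finite[OF ma R] ne rels_subset_atoms[OF R] ij by auto
  have "R j \<subseteq> proj M i j (R i)"
    using pc ij unfolding proj_closed_def by blast
  also have "\<dots> = (\<Union>a\<in>R i. proj M i j {a})"
    using projection_op_UN_singletons[OF multi_algebra_projection_op[OF ma ij] Ri] .
  also have "\<dots> \<subseteq> (\<Union>a\<in>R i. proj M' i j {a})"
    using atoms_le Ri(3) by blast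
  also have "\<dots> = proj M' i j (R i)"
    using projection_op_UN_singletons[OF multi_algebra_projection_op[OF ma' ij'] Ri(1,2)] Ri(3)
    by (simp add: eq)
  finally show "R j \<subseteq> proj M' i j (R i)" .
qed

lemma weakening_alg_closure_le:
  assumes w: "weakening M' M" and fin: "finite E" and N: "rel_network M E N"
    and nti: "\<not> trivially_inconsistent M E (alg_closure M E N)"
  shows "alg_closure M E N \<le> alg_closure M' E N"
proof -
  have ma: "multi_algebra M" and ma': "multi_algebra M'"
    using w unfolding weakening_def by simp_all
  define C where "C = alg_closure M E N"
  have C: "rel_network M E C" "alg_closed M E C" "C \<le> N"
    unfolding C_def using alg_closure_rel_network[OF ma fin N] alg_closure_alg_closed[OF ma fin N]
      alg_closure_le[OF ma fin N] .
  have "alg_closed M' E C"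
    unfolding alg_closed_def weakening_mconv[OF w] weakening_mcomp[OF w]
  proof (intro ballI impI conjI)
    fix a c assume ac: "a \<in> E" "c \<in> E" "a \<noteq> c"
    have Cr: "C a c \<in> rels M"
      using rel_networkD(1)[OF C(1) ac] .
    have "proj_closure M (C a c) = C a c"
      using C(2) ac unfolding alg_closed_def by blast
    then have "proj_closed M (C a c)"
      using proj_closure_proj_closed[OF ma Cr] by simp
    moreover have "\<forall>i<dim M. C a c i \<noteq> {}"
      using nti ac unfolding C_def trivially_inconsistent_def by blast
    ultimately have "proj_closed M' (C a c)"
      using weakening_proj_closed[OF w Cr] by blast
    then show "proj_closure M' (C a c) = C a c"
      using proj_closure_id[OF ma'] Cr weakening_rels[OF w] by simp
    show "C c a = mconv M (C a c)"
      using C(2) ac unfolding alg_closed_def by blast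
    show "C a c \<le> mcomp M (C a b) (C b c)" if "b \<in> E" "b \<noteq> a" "b \<noteq> c" for b
      using C(2) ac that unfolding alg_closed_def by blast
  qed
  moreover have "rel_network M' E N"
    using N unfolding rel_network_def weakening_rels[OF w] weakening_mconv[OF w] .
  ultimately have "C \<le> alg_closure M' E N"
    using alg_closure_greatest[OF ma' fin _ _ C(3)] by blast
  then show ?thesis
    unfolding C_def .
qed

theorem proposition6p27:
  fixes M M' :: "'b multi_alg" and U :: "'u set" and \<phi> :: "'b rel \<Rightarrow> ('u \<times> 'u) set"
    and S :: "'b rel set"
  assumes "seq_formalism M U \<phi>"
    and "weakening M' M"
    and "S \<subseteq> rels M"
    and "alg_tractable M' U \<phi> S"
  shows "alg_tractable M U \<phi> S"
  unfolding alg_tractable_def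
proof (intro allI impI)
  fix E N assume nw: "network_over M S E N"
  have fin: "finite E" and N: "rel_network M E N"
    using nw assms(3) unfolding network_over_def rel_network_def by (blast, blast)
  show "satisfiable U \<phi> E N \<longleftrightarrow> \<not> trivially_inconsistent M E (alg_closure M E N)"
  proof
    assume "satisfiable U \<phi> E N"
    then show "\<not> trivially_inconsistent M E (alg_closure M E N)"
      by (rule alg_closure_sound[OF assms(1) fin N])
  next
    assume "\<not> trivially_inconsistent M E (alg_closure M E N)"
    then have "\<not> trivially_inconsistent M E (alg_closure M' E N)"
      using weakening_alg_closure_le[OF assms(2) fin N] trivially_inconsistent_mono by blast
    then have "\<not> trivially_inconsistent M' E (alg_closure M' E N)"
      by (simp add: weakening_trivially_inconsistent[OF assms(2)])
    moreover have "network_over M' S E N"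
      using nw by (simp add: weakening_network_over[OF assms(2)])
    ultimately show "satisfiable U \<phi> E N"
      using assms(4) unfolding alg_tractable_def by (elim allE impE) blast+
  qed
qed

end
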